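(* Let $\mathcal A$ be a $K$-armed bandit algorithm which at each round $t$ draws $A_t$ according to a probability vector $x_t=x_t(\mathcal A)$ determined by the past, i.e. $\mathbb P(A_t=a\mid\mathcal F_{t-1})=x_{t,a}$, and let $\overline x_T=\frac1T\sum_{t=1}^Tx_t$. Suppose there exists $\varepsilon=\varepsilon_T>0$ with $T\varepsilon\to\infty$ and $\min_{a\in[K]}\overline x_{T,a}\ge\varepsilon$. Suppose additionally that there exists a deterministic probability vector $x^\star_T$ with all coordinates positive such that $\overline x_{T,a}/x^\star_{T,a}\to1$ in probability for every arm $a\in[K]$. Then $\mathcal A$ is stable.
   Context: $\mathcal F_{t-1}$ is the sigma-field generated by the history up to round $t-1$. $n_{a,T}=\sum_{t=1}^T\mathbb I\{A_t=a\}$. An algorithm is stable if for every arm $a$ there exist non-random scalars $n^\star_{a,T}$ (possibly depending on the problem parameters and $T$) such that $n_{a,T}/n^\star_{a,T}\to1$ in probability and $n^\star_{a,T}\to\infty$ as $T\to\infty$. *)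

theory Defs
  imports "HOL-Probability.Probability"
begin

definition pulls :: "(nat \<Rightarrow> 'w \<Rightarrow> nat) \<Rightarrow> nat \<Rightarrow> nat \<Rightarrow> 'w \<Rightarrow> nat" where
  "pulls A T a \<omega> = card {t \<in> {1..T}. A t \<omega> = a}"

definition avg_prob :: "(nat \<Rightarrow> nat \<Rightarrow> 'w \<Rightarrow> real) \<Rightarrow> nat \<Rightarrow> nat \<Rightarrow> 'w \<Rightarrow> real" where
  "avg_prob x T a \<omega> = (1 / real T) * (\<Sum>t = 1..T. x t a \<omega>)"

definition conv_in_prob :: "'w measure \<Rightarrow> (nat \<Rightarrow> 'w \<Rightarrow> real) \<Rightarrow> real \<Rightarrow> bool" where
  "conv_in_prob M Y c \<longleftrightarrow>
     (\<forall>\<delta>>0. (\<lambda>T. measure M {\<omega> \<in> space M. \<bar>Y T \<omega> - c\<bar> > \<delta>}) \<longlonglongrightarrow> 0)"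

definition stable :: "'w measure \<Rightarrow> nat \<Rightarrow> (nat \<Rightarrow> 'w \<Rightarrow> nat) \<Rightarrow> bool" where
  "stable M K A \<longleftrightarrow>
     (\<forall>a < K. \<exists>nstar :: nat \<Rightarrow> real.
        conv_in_prob M (\<lambda>T \<omega>. real (pulls A T a \<omega>) / nstar T) 1 \<and>
        filterlim nstar at_top sequentially)"

end

theory Submission
  imports Defs
begin

(*
  Fix an arm a, let N_T be its number of pulls, S_T = x_{1,a} + ... + x_{T,a} the compensator
  of N_T, and n*_T = T x*_{T,a}, so that S_T / n*_T = xbar_{T,a} / x*_{T,a} tends to 1 in
  probability.  Since xbar_{T,a} >= eps_T almost surely, with positive probability
  eps_T <= xbar_{T,a} <= 2 x*_{T,a}; hence n*_T >= T eps_T / 2 tends to infinity.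

  N_T - S_T is a sum of martingale differences I_t - x_{t,a} whose conditional variances
  x_{t,a} (1 - x_{t,a}) add up to at most S_T.  Chebyshev's inequality then gives
  N_T / n*_T -> 1 in probability.
*)

lemma sum_up_to_threshold_le:
  fixes q :: "nat \<Rightarrow> real"
  assumes q_nonneg: "\<And>t. 0 \<le> q t" and c: "0 \<le> c"
  shows "(\<Sum>t=1..n. (if (\<Sum>s=1..t. q s) \<le> c then 1 else 0) * q t) \<le> min (\<Sum>t=1..n. q t) c"
proof (induction n)
  case 0
  then show ?case using c by simp
next
  case (Suc n)
  have "(\<Sum>t=1..n. q t) \<le> (\<Sum>t=1..Suc n. q t)"
    using q_nonneg[of "Suc n"] by simp
  with Suc.IH show ?case by auto
qed

lemma count_deviation_le:
  fixes i q :: "nat \<Rightarrow> real" and m \<eta> :: real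
  assumes q_nonneg: "\<And>t. 0 \<le> q t" and m: "0 < m" and \<eta>: "\<eta> \<le> 1"
    and close: "\<bar>(\<Sum>t=1..n. q t) / m - 1\<bar> \<le> \<eta>"
  shows "\<bar>(\<Sum>t=1..n. i t) / m - 1\<bar>
    \<le> \<bar>\<Sum>t=1..n. (if (\<Sum>s=1..t. q s) \<le> 2 * m then 1 else 0) * (i t - q t)\<bar> / m + \<eta>"
proof -
  have "(\<Sum>t=1..n. q t) / m \<le> 2" using close \<eta> by linarith
  then have total_below: "(\<Sum>t=1..n. q t) \<le> 2 * m" using m by (simp add: divide_le_eq)
  have below: "(\<Sum>s=1..t. q s) \<le> 2 * m" if "t \<in> {1..n}" for t
  proof -
    have "(\<Sum>s=1..t. q s) \<le> (\<Sum>s=1..n. q s)"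
      using that q_nonneg by (intro sum_mono2) auto
    with total_below show ?thesis by linarith
  qed
  have truncation_inactive: "(\<Sum>t=1..n. (if (\<Sum>s=1..t. q s) \<le> 2 * m then 1 else 0) * (i t - q t))
      = (\<Sum>t=1..n. i t) - (\<Sum>t=1..n. q t)"
    using below by (simp add: sum_subtractf)
  have "\<bar>(\<Sum>t=1..n. i t) / m - 1\<bar>
      = \<bar>((\<Sum>t=1..n. i t) - (\<Sum>t=1..n. q t)) / m + ((\<Sum>t=1..n. q t) / m - 1)\<bar>"
    by (simp add: diff_divide_distrib)
  also have "\<dots> \<le> \<bar>((\<Sum>t=1..n. i t) - (\<Sum>t=1..n. q t)) / m\<bar> + \<bar>(\<Sum>t=1..n. q t) / m - 1\<bar>"
    by (rule abs_triangle_ineq)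
  also have "\<dots> \<le> \<bar>(\<Sum>t=1..n. i t) - (\<Sum>t=1..n. q t)\<bar> / m + \<eta>"
    using close m by (simp add: abs_divide)
  finally show ?thesis
    unfolding truncation_inactive .
qed

(* Apart from the conditional variance G^2 q (1 - q), every term is a multiple of J - q. *)
lemma square_increment_decomposition:
  fixes P G J q :: real
  assumes "J = 0 \<or> J = 1"
  shows "(P + G * (J - q))\<^sup>2 = P\<^sup>2 + G\<^sup>2 * q * (1 - q) + (2 * P * G + G\<^sup>2 * (1 - 2 * q)) * (J - q)"
  using assms by (elim disjE) (simp_all add: power2_eq_square algebra_simps)

lemma variance_term_bounds:
  fixes a b :: real
  assumes "\<bar>a\<bar> \<le> 1" "0 \<le> b" "b \<le> 1"
  shows "0 \<le> a\<^sup>2 * b * (1 - b)" "a\<^sup>2 * b * (1 - b) \<le> \<bar>a\<bar> * b"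
proof -
  show "0 \<le> a\<^sup>2 * b * (1 - b)" using assms by simp
  have "a\<^sup>2 = \<bar>a\<bar> * \<bar>a\<bar>"
    by (simp add: power2_eq_square)
  also have "\<dots> \<le> \<bar>a\<bar> * 1"
    using assms(1) by (intro mult_left_mono) auto
  finally have "a\<^sup>2 \<le> \<bar>a\<bar>" by simp
  then have "a\<^sup>2 * (b * (1 - b)) \<le> \<bar>a\<bar> * (b * 1)"
    using assms by (intro mult_mono) auto
  then show "a\<^sup>2 * b * (1 - b) \<le> \<bar>a\<bar> * b" by (simp add: mult.assoc)
qed

lemma (in finite_measure) integrable_bounded_real:
  fixes f :: "'a \<Rightarrow> real"
  assumes "f \<in> borel_measurable M" "\<And>\<omega>. \<omega> \<in> space M \<Longrightarrow> \<bar>f \<omega>\<bar> \<le> B"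
  shows "integrable M f"
  using assms by (intro integrable_const_bound[where B = B]) auto

lemma (in finite_measure) integrable_square_bounded_real:
  fixes f :: "'a \<Rightarrow> real"
  assumes "\<And>\<omega>. \<omega> \<in> space M \<Longrightarrow> \<bar>f \<omega>\<bar> \<le> B" "f \<in> borel_measurable M"
  shows "integrable M (\<lambda>\<omega>. (f \<omega>)\<^sup>2)"
proof (rule integrable_bounded_real[where B = "B\<^sup>2"])
  fix \<omega> assume "\<omega> \<in> space M"
  then have "\<bar>f \<omega>\<bar>\<^sup>2 \<le> B\<^sup>2"
    using assms(1) by (intro power_mono) auto
  then show "\<bar>(f \<omega>)\<^sup>2\<bar> \<le> B\<^sup>2" by simp
qed (use assms(2) in measurable)

lemma (in prob_space) eventually_le_of_conv_in_prob_ratio: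
  fixes Y :: "nat \<Rightarrow> 'a \<Rightarrow> real"
  assumes conv: "conv_in_prob M (\<lambda>T \<omega>. Y T \<omega> / c T) 1"
    and Y_measurable: "\<And>T. Y T \<in> borel_measurable M"
    and c_pos: "\<And>T. 0 < c T"
    and lower: "\<forall>\<^sub>F T in sequentially. AE \<omega> in M. e T \<le> Y T \<omega>"
  shows "\<forall>\<^sub>F T in sequentially. e T \<le> 2 * c T"
proof -
  have "(\<lambda>T. prob {\<omega> \<in> space M. 1 < \<bar>Y T \<omega> / c T - 1\<bar>}) \<longlonglongrightarrow> 0"
    using conv unfolding conv_in_prob_def by simp
  then have "\<forall>\<^sub>F T in sequentially. prob {\<omega> \<in> space M. 1 < \<bar>Y T \<omega> / c T - 1\<bar>} < 1"
    by (rule order_tendstoD) simp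
  then show ?thesis
    using lower
  proof eventually_elim
    case (elim T)
    have [measurable]: "Y T \<in> borel_measurable M" by (rule Y_measurable)
    have "\<not> (AE \<omega> in M. 1 < \<bar>Y T \<omega> / c T - 1\<bar>)"
      using elim(1) prob_Collect_eq_1[of "\<lambda>\<omega>. 1 < \<bar>Y T \<omega> / c T - 1\<bar>"] by simp
    then obtain \<omega> where "\<omega> \<in> space M" "e T \<le> Y T \<omega>" "\<bar>Y T \<omega> / c T - 1\<bar> \<le> 1"
      using AE_mp[OF elim(2)] by (metis (mono_tags, lifting) AE_I2 not_less)
    then show "e T \<le> 2 * c T"
      using c_pos[of T] by (simp add: abs_le_iff divide_le_eq)
  qed
qed

lemma (in prob_space) filterlim_of_conv_in_prob_ratio:
  fixes Y :: "nat \<Rightarrow> 'a \<Rightarrow> real"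
  assumes conv: "conv_in_prob M (\<lambda>T \<omega>. Y T \<omega> / c T) 1"
    and Y_measurable: "\<And>T. Y T \<in> borel_measurable M"
    and c_pos: "\<And>T. 0 < c T"
    and lower: "\<forall>\<^sub>F T in sequentially. AE \<omega> in M. e T \<le> Y T \<omega>"
    and e_lim: "filterlim (\<lambda>T. real T * e T) at_top sequentially"
  shows "filterlim (\<lambda>T. real T * c T) at_top sequentially"
proof -
  have "\<forall>\<^sub>F T in sequentially. e T \<le> 2 * c T"
    using conv Y_measurable c_pos lower by (rule eventually_le_of_conv_in_prob_ratio)
  then have "\<forall>\<^sub>F T in sequentially. real T * e T / 2 \<le> real T * c T"
  proof eventually_elim
    case (elim T)
    then have "real T * e T \<le> real T * (2 * c T)"
      by (intro mult_left_mono) auto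
    then show ?case by simp
  qed
  moreover have "filterlim (\<lambda>T. real T * e T / 2) at_top sequentially"
    using filterlim_tendsto_pos_mult_at_top[OF tendsto_const _ e_lim, of "1 / 2"] by simp
  ultimately show ?thesis
    by (rule filterlim_at_top_mono[rotated])
qed

locale predictable_bernoulli = prob_space M for M :: "'w measure" +
  fixes F :: "nat \<Rightarrow> 'w measure" and I p :: "nat \<Rightarrow> 'w \<Rightarrow> real"
  assumes subalgebra: "\<And>t. subalgebra M (F t)"
    and filtration_mono: "\<And>s t. s \<le> t \<Longrightarrow> sets (F s) \<subseteq> sets (F t)"
    and I_measurable: "\<And>t. I t \<in> borel_measurable (F t)"
    and I_01: "\<And>t \<omega>. \<omega> \<in> space M \<Longrightarrow> I t \<omega> = 0 \<or> I t \<omega> = 1"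
    and p_measurable: "\<And>t. t \<ge> 1 \<Longrightarrow> p t \<in> borel_measurable (F (t - 1))"
    and p_nonneg: "\<And>t \<omega>. \<omega> \<in> space M \<Longrightarrow> 0 \<le> p t \<omega>"
    and p_le_1: "\<And>t \<omega>. \<omega> \<in> space M \<Longrightarrow> p t \<omega> \<le> 1"
    and cond_exp_I: "\<And>t. t \<ge> 1 \<Longrightarrow> AE \<omega> in M. real_cond_exp M (F (t - 1)) (I t) \<omega> = p t \<omega>"
begin

lemma borel_measurable_filtration_mono:
  assumes "s \<le> t" "f \<in> borel_measurable (F s)"
  shows "f \<in> borel_measurable (F t)"
proof -
  have "subalgebra (F t) (F s)"
    using subalgebra[of s] subalgebra[of t] filtration_mono[OF assms(1)]
    unfolding subalgebra_def by auto
  then show ?thesis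
    using measurable_from_subalg assms(2) by blast
qed

lemma borel_measurable_filtration:
  "f \<in> borel_measurable (F s) \<Longrightarrow> f \<in> borel_measurable M"
  using measurable_from_subalg[OF subalgebra] by blast

lemma I_borel_measurable: "I t \<in> borel_measurable M"
  using borel_measurable_filtration[OF I_measurable] .

lemma p_borel_measurable: "t \<ge> 1 \<Longrightarrow> p t \<in> borel_measurable M"
  using borel_measurable_filtration[OF p_measurable] .

lemma abs_I_minus_p_le_1: "\<omega> \<in> space M \<Longrightarrow> \<bar>I t \<omega> - p t \<omega>\<bar> \<le> 1"
  using I_01[of \<omega> t] p_nonneg[of \<omega> t] p_le_1[of \<omega> t] by auto

lemma integrable_mult_innovation:
  fixes Z :: "'w \<Rightarrow> real"
  assumes t: "t \<ge> 1" and Z_measurable: "Z \<in> borel_measurable M"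
    and Z_bounded: "\<And>\<omega>. \<omega> \<in> space M \<Longrightarrow> \<bar>Z \<omega>\<bar> \<le> B"
  shows "integrable M (\<lambda>\<omega>. Z \<omega> * (I t \<omega> - p t \<omega>))"
proof (rule integrable_bounded_real[where B = "B * 1"])
  show "(\<lambda>\<omega>. Z \<omega> * (I t \<omega> - p t \<omega>)) \<in> borel_measurable M"
    using Z_measurable I_borel_measurable p_borel_measurable[OF t] by measurable
  fix \<omega> assume \<omega>: "\<omega> \<in> space M"
  show "\<bar>Z \<omega> * (I t \<omega> - p t \<omega>)\<bar> \<le> B * 1"
    using Z_bounded[OF \<omega>] abs_I_minus_p_le_1[OF \<omega>] unfolding abs_mult
    by (intro mult_mono) auto
qed

lemma integral_predictable_mult_innovation:
  fixes Z :: "'w \<Rightarrow> real"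
  assumes t: "t \<ge> 1" and Z_measurable: "Z \<in> borel_measurable (F (t - 1))"
    and Z_bounded: "\<And>\<omega>. \<omega> \<in> space M \<Longrightarrow> \<bar>Z \<omega>\<bar> \<le> B"
  shows "(\<integral>\<omega>. Z \<omega> * (I t \<omega> - p t \<omega>) \<partial>M) = 0"
proof -
  interpret finite_measure_subalgebra M "F (t - 1)"
    by unfold_locales (rule subalgebra)
  have [measurable]: "Z \<in> borel_measurable M" "I t \<in> borel_measurable M" "p t \<in> borel_measurable M"
    using borel_measurable_filtration[OF Z_measurable] I_borel_measurable p_borel_measurable[OF t]
    by auto
  have int_ZI: "integrable M (\<lambda>\<omega>. Z \<omega> * I t \<omega>)"
  proof (rule integrable_bounded_real[where B = B])
    fix \<omega> assume \<omega>: "\<omega> \<in> space M"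
    show "\<bar>Z \<omega> * I t \<omega>\<bar> \<le> B"
      using Z_bounded[OF \<omega>] I_01[OF \<omega>, of t] by auto
  qed simp
  have int_Zp: "integrable M (\<lambda>\<omega>. Z \<omega> * p t \<omega>)"
  proof (rule integrable_bounded_real[where B = B])
    fix \<omega> assume \<omega>: "\<omega> \<in> space M"
    have "\<bar>Z \<omega>\<bar> * \<bar>p t \<omega>\<bar> \<le> B * 1"
      using Z_bounded[OF \<omega>] p_nonneg[OF \<omega>, of t] p_le_1[OF \<omega>, of t]
      by (intro mult_mono) auto
    then show "\<bar>Z \<omega> * p t \<omega>\<bar> \<le> B" by (simp add: abs_mult)
  qed simp
  have "(\<integral>\<omega>. Z \<omega> * I t \<omega> \<partial>M) = (\<integral>\<omega>. Z \<omega> * real_cond_exp M (F (t - 1)) (I t) \<omega> \<partial>M)"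
    using real_cond_exp_intg(2)[OF int_ZI Z_measurable] by simp
  also have "\<dots> = (\<integral>\<omega>. Z \<omega> * p t \<omega> \<partial>M)"
    by (rule integral_cong_AE) (use cond_exp_I[OF t] in auto)
  finally show ?thesis
    using int_ZI int_Zp by (simp add: right_diff_distrib)
qed

lemma borel_measurable_transform:
  assumes g_measurable: "\<And>t. t \<ge> 1 \<Longrightarrow> g t \<in> borel_measurable (F (t - 1))"
  shows "(\<lambda>\<omega>. \<Sum>t=1..n. g t \<omega> * (I t \<omega> - p t \<omega>)) \<in> borel_measurable (F n)"
proof (rule borel_measurable_sum)
  fix t assume "t \<in> {1..n}"
  then have t: "t \<ge> 1" "t \<le> n" by auto
  have [measurable]: "g t \<in> borel_measurable (F t)" "p t \<in> borel_measurable (F t)"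
    using borel_measurable_filtration_mono[of "t - 1" t] g_measurable[OF t(1)] p_measurable[OF t(1)]
    by auto
  have "(\<lambda>\<omega>. g t \<omega> * (I t \<omega> - p t \<omega>)) \<in> borel_measurable (F t)"
    using I_measurable[of t] by measurable
  then show "(\<lambda>\<omega>. g t \<omega> * (I t \<omega> - p t \<omega>)) \<in> borel_measurable (F n)"
    using borel_measurable_filtration_mono[OF t(2)] by blast
qed

lemma abs_transform_le:
  assumes g_bounded: "\<And>t \<omega>. \<omega> \<in> space M \<Longrightarrow> \<bar>g t \<omega>\<bar> \<le> 1" and \<omega>: "\<omega> \<in> space M"
  shows "\<bar>\<Sum>t=1..n. g t \<omega> * (I t \<omega> - p t \<omega>)\<bar> \<le> real n"
proof -
  have "\<bar>\<Sum>t=1..n. g t \<omega> * (I t \<omega> - p t \<omega>)\<bar> \<le> (\<Sum>t=1..n. \<bar>g t \<omega> * (I t \<omega> - p t \<omega>)\<bar>)"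
    by (rule sum_abs)
  also have "\<dots> \<le> (\<Sum>t=1..n. 1 * 1)"
    using g_bounded[OF \<omega>] abs_I_minus_p_le_1[OF \<omega>]
    by (intro sum_mono) (simp add: abs_mult mult_le_one)
  finally show ?thesis by simp
qed

lemma integrable_variance_term:
  assumes t: "t \<ge> 1" and g_measurable: "g \<in> borel_measurable (F (t - 1))"
    and g_bounded: "\<And>\<omega>. \<omega> \<in> space M \<Longrightarrow> \<bar>g \<omega>\<bar> \<le> 1"
  shows "integrable M (\<lambda>\<omega>. (g \<omega>)\<^sup>2 * p t \<omega> * (1 - p t \<omega>))"
proof (rule integrable_bounded_real[where B = 1])
  have [measurable]: "g \<in> borel_measurable M" "p t \<in> borel_measurable M"
    using borel_measurable_filtration[OF g_measurable] p_borel_measurable[OF t] by auto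
  show "(\<lambda>\<omega>. (g \<omega>)\<^sup>2 * p t \<omega> * (1 - p t \<omega>)) \<in> borel_measurable M"
    by measurable
  fix \<omega> assume \<omega>: "\<omega> \<in> space M"
  note bounds = variance_term_bounds[OF g_bounded[OF \<omega>] p_nonneg[OF \<omega>] p_le_1[OF \<omega>], of t]
  have "\<bar>g \<omega>\<bar> * p t \<omega> \<le> 1"
    using g_bounded[OF \<omega>] p_nonneg[OF \<omega>, of t] p_le_1[OF \<omega>, of t] by (simp add: mult_le_one)
  with bounds show "\<bar>(g \<omega>)\<^sup>2 * p t \<omega> * (1 - p t \<omega>)\<bar> \<le> 1" by linarith
qed

lemma integrable_variance_sum:
  assumes g_measurable: "\<And>t. t \<ge> 1 \<Longrightarrow> g t \<in> borel_measurable (F (t - 1))"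
    and g_bounded: "\<And>t \<omega>. \<omega> \<in> space M \<Longrightarrow> \<bar>g t \<omega>\<bar> \<le> 1"
  shows "integrable M (\<lambda>\<omega>. \<Sum>t=1..n. (g t \<omega>)\<^sup>2 * p t \<omega> * (1 - p t \<omega>))"
proof (rule Bochner_Integration.integrable_sum)
  fix t assume "t \<in> {1..n}"
  then show "integrable M (\<lambda>\<omega>. (g t \<omega>)\<^sup>2 * p t \<omega> * (1 - p t \<omega>))"
    using g_measurable g_bounded by (intro integrable_variance_term) auto
qed

lemma integral_square_add_increment:
  assumes P_measurable: "P \<in> borel_measurable (F n)"
    and P_bounded: "\<And>\<omega>. \<omega> \<in> space M \<Longrightarrow> \<bar>P \<omega>\<bar> \<le> B"
    and G_measurable: "G \<in> borel_measurable (F n)"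
    and G_bounded: "\<And>\<omega>. \<omega> \<in> space M \<Longrightarrow> \<bar>G \<omega>\<bar> \<le> 1"
  shows "(\<integral>\<omega>. (P \<omega> + G \<omega> * (I (Suc n) \<omega> - p (Suc n) \<omega>))\<^sup>2 \<partial>M)
    = (\<integral>\<omega>. (P \<omega>)\<^sup>2 \<partial>M) + (\<integral>\<omega>. (G \<omega>)\<^sup>2 * p (Suc n) \<omega> * (1 - p (Suc n) \<omega>) \<partial>M)"
proof -
  define J where "J = I (Suc n)"
  define q where "q = p (Suc n)"
  define Z where "Z \<omega> = 2 * P \<omega> * G \<omega> + (G \<omega>)\<^sup>2 * (1 - 2 * q \<omega>)" for \<omega>
  have q_measurable: "q \<in> borel_measurable (F n)"
    unfolding q_def using p_measurable[of "Suc n"] by simp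
  have [measurable]: "P \<in> borel_measurable M" "G \<in> borel_measurable M" "q \<in> borel_measurable M"
    "J \<in> borel_measurable M"
    using P_measurable G_measurable q_measurable I_borel_measurable unfolding J_def
    by (auto intro: borel_measurable_filtration)
  have Z_bounded: "\<bar>Z \<omega>\<bar> \<le> 2 * B + 1" if \<omega>: "\<omega> \<in> space M" for \<omega>
  proof -
    have "\<bar>P \<omega>\<bar> * \<bar>G \<omega>\<bar> \<le> B * 1"
      using P_bounded[OF \<omega>] G_bounded[OF \<omega>] by (intro mult_mono) auto
    moreover have "\<bar>(G \<omega>)\<^sup>2 * (1 - 2 * q \<omega>)\<bar> \<le> 1 * 1"
      using G_bounded[OF \<omega>] p_nonneg[OF \<omega>, of "Suc n"] p_le_1[OF \<omega>, of "Suc n"]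
      unfolding q_def abs_mult by (intro mult_mono) (auto simp: abs_square_le_1)
    moreover have "\<bar>Z \<omega>\<bar> \<le> 2 * (\<bar>P \<omega>\<bar> * \<bar>G \<omega>\<bar>) + \<bar>(G \<omega>)\<^sup>2 * (1 - 2 * q \<omega>)\<bar>"
      unfolding Z_def using abs_triangle_ineq[of "2 * P \<omega> * G \<omega>" "(G \<omega>)\<^sup>2 * (1 - 2 * q \<omega>)"]
      by (simp add: abs_mult)
    ultimately show ?thesis by linarith
  qed
  have int_P2: "integrable M (\<lambda>\<omega>. (P \<omega>)\<^sup>2)"
    using P_bounded by (rule integrable_square_bounded_real) measurable
  have int_Gq: "integrable M (\<lambda>\<omega>. (G \<omega>)\<^sup>2 * q \<omega> * (1 - q \<omega>))"
    unfolding q_def using G_measurable G_bounded by (intro integrable_variance_term) auto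
  have int_ZJ: "integrable M (\<lambda>\<omega>. Z \<omega> * (J \<omega> - q \<omega>))"
    unfolding J_def q_def
    by (rule integrable_mult_innovation[OF _ _ Z_bounded]) (auto simp: Z_def)
  have orthogonal: "(\<integral>\<omega>. Z \<omega> * (J \<omega> - q \<omega>) \<partial>M) = 0"
    unfolding J_def q_def
    by (rule integral_predictable_mult_innovation[OF _ _ Z_bounded])
      (use P_measurable G_measurable q_measurable in \<open>auto simp: Z_def\<close>)
  have "(\<integral>\<omega>. (P \<omega> + G \<omega> * (J \<omega> - q \<omega>))\<^sup>2 \<partial>M)
      = (\<integral>\<omega>. (P \<omega>)\<^sup>2 + (G \<omega>)\<^sup>2 * q \<omega> * (1 - q \<omega>) + Z \<omega> * (J \<omega> - q \<omega>) \<partial>M)"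
    unfolding Z_def J_def
    by (intro Bochner_Integration.integral_cong refl square_increment_decomposition)
      (use I_01 in auto)
  also have "\<dots> = (\<integral>\<omega>. (P \<omega>)\<^sup>2 \<partial>M) + (\<integral>\<omega>. (G \<omega>)\<^sup>2 * q \<omega> * (1 - q \<omega>) \<partial>M)"
    using int_P2 int_Gq int_ZJ orthogonal by simp
  finally show ?thesis
    unfolding J_def q_def .
qed

lemma integral_transform_square:
  assumes g_measurable: "\<And>t. t \<ge> 1 \<Longrightarrow> g t \<in> borel_measurable (F (t - 1))"
    and g_bounded: "\<And>t \<omega>. \<omega> \<in> space M \<Longrightarrow> \<bar>g t \<omega>\<bar> \<le> 1"
  shows "(\<integral>\<omega>. (\<Sum>t=1..n. g t \<omega> * (I t \<omega> - p t \<omega>))\<^sup>2 \<partial>M)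
    = (\<integral>\<omega>. (\<Sum>t=1..n. (g t \<omega>)\<^sup>2 * p t \<omega> * (1 - p t \<omega>)) \<partial>M)"
proof (induction n)
  case 0
  then show ?case by simp
next
  case (Suc n)
  have "(\<integral>\<omega>. (\<Sum>t=1..Suc n. g t \<omega> * (I t \<omega> - p t \<omega>))\<^sup>2 \<partial>M)
      = (\<integral>\<omega>. ((\<Sum>t=1..n. g t \<omega> * (I t \<omega> - p t \<omega>)) + g (Suc n) \<omega> * (I (Suc n) \<omega> - p (Suc n) \<omega>))\<^sup>2 \<partial>M)"
    by simp
  also have "\<dots> = (\<integral>\<omega>. (\<Sum>t=1..n. g t \<omega> * (I t \<omega> - p t \<omega>))\<^sup>2 \<partial>M)
      + (\<integral>\<omega>. (g (Suc n) \<omega>)\<^sup>2 * p (Suc n) \<omega> * (1 - p (Suc n) \<omega>) \<partial>M)"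
    using g_measurable[of "Suc n"] g_bounded
    by (intro integral_square_add_increment[where B = "real n"] borel_measurable_transform
        abs_transform_le[OF g_bounded] g_measurable) auto
  also have "\<dots> = (\<integral>\<omega>. (\<Sum>t=1..n. (g t \<omega>)\<^sup>2 * p t \<omega> * (1 - p t \<omega>)) \<partial>M)
      + (\<integral>\<omega>. (g (Suc n) \<omega>)\<^sup>2 * p (Suc n) \<omega> * (1 - p (Suc n) \<omega>) \<partial>M)"
    by (simp only: Suc.IH)
  also have "\<dots> = (\<integral>\<omega>. (\<Sum>t=1..Suc n. (g t \<omega>)\<^sup>2 * p t \<omega> * (1 - p t \<omega>)) \<partial>M)"
    using integrable_variance_sum[OF g_measurable g_bounded, of n]
      integrable_variance_term[of "Suc n" "g (Suc n)"] g_measurable[of "Suc n"] g_bounded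
    by simp
  finally show ?case .
qed

lemma borel_measurable_compensator:
  "(\<lambda>\<omega>. \<Sum>s=1..t. p s \<omega>) \<in> borel_measurable (F (t - 1))"
proof (rule borel_measurable_sum)
  fix s assume "s \<in> {1..t}"
  then show "p s \<in> borel_measurable (F (t - 1))"
    using p_measurable[of s] by (auto intro: borel_measurable_filtration_mono[of "s - 1"])
qed

lemma prob_truncated_transform_ge:
  assumes c: "0 \<le> c" and r: "0 < r"
  shows "prob {\<omega> \<in> space M. r \<le> \<bar>\<Sum>t=1..n. (if (\<Sum>s=1..t. p s \<omega>) \<le> c then 1 else 0) * (I t \<omega> - p t \<omega>)\<bar>}
    \<le> c / r\<^sup>2"
proof -
  define g where "g = (\<lambda>t \<omega>. if (\<Sum>s=1..t. p s \<omega>) \<le> c then 1 else 0 :: real)"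
  define Q where "Q \<omega> = (\<Sum>t=1..n. g t \<omega> * (I t \<omega> - p t \<omega>))" for \<omega>
  have g_measurable: "g t \<in> borel_measurable (F (t - 1))" for t
    using borel_measurable_compensator[of t] unfolding g_def by measurable
  have g_bounded: "\<bar>g t \<omega>\<bar> \<le> 1" for t \<omega>
    by (simp add: g_def)
  have [measurable]: "Q \<in> borel_measurable M"
    unfolding Q_def using borel_measurable_transform[OF g_measurable]
    by (auto intro: borel_measurable_filtration)
  have Q_bounded: "\<bar>Q \<omega>\<bar> \<le> real n" if "\<omega> \<in> space M" for \<omega>
    unfolding Q_def using abs_transform_le[OF g_bounded that] .
  have int_Q2: "integrable M (\<lambda>\<omega>. (Q \<omega>)\<^sup>2)"
    using Q_bounded by (rule integrable_square_bounded_real) measurable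
  have variance_le: "(\<Sum>t=1..n. (g t \<omega>)\<^sup>2 * p t \<omega> * (1 - p t \<omega>)) \<le> c" if \<omega>: "\<omega> \<in> space M" for \<omega>
  proof -
    have "(\<Sum>t=1..n. (g t \<omega>)\<^sup>2 * p t \<omega> * (1 - p t \<omega>)) \<le> (\<Sum>t=1..n. \<bar>g t \<omega>\<bar> * p t \<omega>)"
      using variance_term_bounds(2)[OF g_bounded p_nonneg[OF \<omega>] p_le_1[OF \<omega>]]
      by (intro sum_mono) auto
    also have "\<dots> \<le> min (\<Sum>t=1..n. p t \<omega>) c"
      using sum_up_to_threshold_le[OF p_nonneg[OF \<omega>] c] by (simp add: g_def)
    finally show ?thesis by simp
  qed
  have "(\<integral>\<omega>. (Q \<omega>)\<^sup>2 \<partial>M) = (\<integral>\<omega>. (\<Sum>t=1..n. (g t \<omega>)\<^sup>2 * p t \<omega> * (1 - p t \<omega>)) \<partial>M)"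
    unfolding Q_def using g_measurable g_bounded by (rule integral_transform_square)
  also have "\<dots> \<le> c"
  proof (rule integral_le_const)
    show "integrable M (\<lambda>\<omega>. \<Sum>t=1..n. (g t \<omega>)\<^sup>2 * p t \<omega> * (1 - p t \<omega>))"
      using g_measurable g_bounded by (rule integrable_variance_sum)
  qed (use variance_le in blast)
  finally have second_moment: "(\<integral>\<omega>. (Q \<omega>)\<^sup>2 \<partial>M) \<le> c" .
  have "prob {\<omega> \<in> space M. r \<le> \<bar>Q \<omega>\<bar>} \<le> (\<integral>\<omega>. (Q \<omega>)\<^sup>2 \<partial>M) / r\<^sup>2"
    using int_Q2 r by (intro second_moment_method) auto
  also have "\<dots> \<le> c / r\<^sup>2"
    using second_moment by (simp add: divide_right_mono)
  finally show ?thesis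
    by (simp add: Q_def g_def)
qed

lemma prob_count_deviation_le:
  assumes m: "0 < m" and \<delta>: "0 < \<delta>" and \<eta>: "\<eta> \<le> 1" "\<eta> \<le> \<delta> / 2"
  shows "prob {\<omega> \<in> space M. \<delta> < \<bar>(\<Sum>t=1..T. I t \<omega>) / m - 1\<bar>}
    \<le> prob {\<omega> \<in> space M. \<eta> < \<bar>(\<Sum>t=1..T. p t \<omega>) / m - 1\<bar>} + 8 / (\<delta>\<^sup>2 * m)"
proof -
  define Q where "Q \<omega> = (\<Sum>t=1..T. (if (\<Sum>s=1..t. p s \<omega>) \<le> 2 * m then 1 else 0) * (I t \<omega> - p t \<omega>))"
    for \<omega>
  define E where "E = {\<omega> \<in> space M. \<eta> < \<bar>(\<Sum>t=1..T. p t \<omega>) / m - 1\<bar>}"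
  define D where "D = {\<omega> \<in> space M. \<delta> * m / 2 \<le> \<bar>Q \<omega>\<bar>}"
  have [measurable]: "(\<lambda>\<omega>. \<Sum>t=1..T. p t \<omega>) \<in> borel_measurable M"
    using borel_measurable_filtration[OF borel_measurable_compensator] .
  have E_sets: "E \<in> sets M"
    unfolding E_def by measurable
  have [measurable]: "Q \<in> borel_measurable M"
    unfolding Q_def using I_borel_measurable p_borel_measurable
    by (intro borel_measurable_sum) (auto intro!: borel_measurable_times borel_measurable_diff borel_measurable_if)
  then have D_sets: "D \<in> sets M"
    unfolding D_def by measurable
  have "{\<omega> \<in> space M. \<delta> < \<bar>(\<Sum>t=1..T. I t \<omega>) / m - 1\<bar>} \<subseteq> E \<union> D"
  proof
    fix \<omega> assume "\<omega> \<in> {\<omega> \<in> space M. \<delta> < \<bar>(\<Sum>t=1..T. I t \<omega>) / m - 1\<bar>}"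
    then have \<omega>: "\<omega> \<in> space M" and far: "\<delta> < \<bar>(\<Sum>t=1..T. I t \<omega>) / m - 1\<bar>" by auto
    show "\<omega> \<in> E \<union> D"
    proof (cases "\<omega> \<in> E")
      case False
      then have "\<bar>(\<Sum>t=1..T. p t \<omega>) / m - 1\<bar> \<le> \<eta>" using \<omega> by (auto simp: E_def)
      from count_deviation_le[where i = "\<lambda>t. I t \<omega>", OF p_nonneg[OF \<omega>] m \<eta>(1) this]
      have "\<bar>(\<Sum>t=1..T. I t \<omega>) / m - 1\<bar> \<le> \<bar>Q \<omega>\<bar> / m + \<eta>"
        by (simp add: Q_def)
      with far \<eta>(2) have "\<delta> < \<bar>Q \<omega>\<bar> / m + \<delta> / 2"
        by linarith
      then have "\<delta> * m / 2 \<le> \<bar>Q \<omega>\<bar>"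
        using m by (simp add: field_simps)
      then show ?thesis using \<omega> by (simp add: D_def)
    qed simp
  qed
  then have "prob {\<omega> \<in> space M. \<delta> < \<bar>(\<Sum>t=1..T. I t \<omega>) / m - 1\<bar>} \<le> prob E + prob D"
    using E_sets D_sets by (meson finite_measure_mono measure_Un_le order_trans sets.Un)
  also have "prob D \<le> 2 * m / (\<delta> * m / 2)\<^sup>2"
    unfolding D_def Q_def using m \<delta> by (intro prob_truncated_transform_ge) auto
  also have "\<dots> = 8 / (\<delta>\<^sup>2 * m)"
    using m by (simp add: field_simps power2_eq_square)
  finally show ?thesis
    by (simp add: E_def)
qed

lemma conv_in_prob_count_ratio:
  assumes m_lim: "filterlim m at_top sequentially"
    and compensator_conv: "conv_in_prob M (\<lambda>T \<omega>. (\<Sum>t=1..T. p t \<omega>) / m T) 1"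
  shows "conv_in_prob M (\<lambda>T \<omega>. (\<Sum>t=1..T. I t \<omega>) / m T) 1"
  unfolding conv_in_prob_def
proof (intro allI impI)
  fix \<delta> :: real assume \<delta>: "\<delta> > 0"
  define \<eta> where "\<eta> = min (\<delta> / 2) 1"
  define E where "E T = prob {\<omega> \<in> space M. \<eta> < \<bar>(\<Sum>t=1..T. p t \<omega>) / m T - 1\<bar>}" for T
  show "(\<lambda>T. prob {\<omega> \<in> space M. \<delta> < \<bar>(\<Sum>t=1..T. I t \<omega>) / m T - 1\<bar>}) \<longlonglongrightarrow> 0"
  proof (rule tendsto_sandwich[OF _ _ tendsto_const])
    show "\<forall>\<^sub>F T in sequentially. prob {\<omega> \<in> space M. \<delta> < \<bar>(\<Sum>t=1..T. I t \<omega>) / m T - 1\<bar>}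
        \<le> E T + 8 / (\<delta>\<^sup>2 * m T)"
      using filterlim_at_top_dense[THEN iffD1, OF m_lim, rule_format, of 0]
    proof eventually_elim
      case (elim T)
      show ?case
        unfolding E_def by (rule prob_count_deviation_le) (use elim \<delta> in \<open>auto simp: \<eta>_def\<close>)
    qed
    have "E \<longlonglongrightarrow> 0"
      using compensator_conv \<delta> unfolding conv_in_prob_def E_def \<eta>_def by simp
    moreover have "filterlim (\<lambda>T. \<delta>\<^sup>2 * m T) at_top sequentially"
      using \<delta> by (intro filterlim_tendsto_pos_mult_at_top[OF tendsto_const _ m_lim]) simp
    then have "(\<lambda>T. 8 / (\<delta>\<^sup>2 * m T)) \<longlonglongrightarrow> 0"
      by (intro tendsto_divide_0[OF tendsto_const] filterlim_at_top_imp_at_infinity)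
    ultimately show "(\<lambda>T. E T + 8 / (\<delta>\<^sup>2 * m T)) \<longlonglongrightarrow> 0"
      by (rule tendsto_add_zero)
  qed simp
qed

end

lemma predictable_bernoulli_indicator:
  fixes A :: "nat \<Rightarrow> 'w \<Rightarrow> 'b" and p :: "nat \<Rightarrow> 'w \<Rightarrow> real"
  assumes "prob_space M"
    and "\<And>t. subalgebra M (F t)"
    and "\<And>s t. s \<le> t \<Longrightarrow> sets (F s) \<subseteq> sets (F t)"
    and A_measurable: "\<And>t. A t \<in> measurable (F t) (count_space UNIV)"
    and "\<And>t. t \<ge> 1 \<Longrightarrow> p t \<in> borel_measurable (F (t - 1))"
    and "\<And>t \<omega>. \<omega> \<in> space M \<Longrightarrow> 0 \<le> p t \<omega>"
    and "\<And>t \<omega>. \<omega> \<in> space M \<Longrightarrow> p t \<omega> \<le> 1"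
    and "\<And>t. t \<ge> 1 \<Longrightarrow>
      AE \<omega> in M. real_cond_exp M (F (t - 1)) (\<lambda>\<omega>. if A t \<omega> = a then 1 else 0) \<omega> = p t \<omega>"
  shows "predictable_bernoulli M F (\<lambda>t \<omega>. if A t \<omega> = a then 1 else 0) p"
proof (rule predictable_bernoulli.intro)
  show "prob_space M" by fact
  show "predictable_bernoulli_axioms M F (\<lambda>t \<omega>. if A t \<omega> = a then 1 else 0) p"
  proof
    show "(\<lambda>\<omega>. if A t \<omega> = a then 1 else 0 :: real) \<in> borel_measurable (F t)" for t
      using A_measurable[of t] by measurable
  qed (use assms in auto)
qed

lemma real_pulls_eq_sum:
  "real (pulls A T a \<omega>) = (\<Sum>t=1..T. if A t \<omega> = a then 1 else 0)"
  unfolding pulls_def by (simp add: sum.If_cases Int_def conj_commute)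

theorem lemma2:
  fixes M :: "'w measure" and F :: "nat \<Rightarrow> 'w measure"
    and K :: nat and A :: "nat \<Rightarrow> 'w \<Rightarrow> nat" and x :: "nat \<Rightarrow> nat \<Rightarrow> 'w \<Rightarrow> real"
    and \<epsilon> :: "nat \<Rightarrow> real" and xstar :: "nat \<Rightarrow> nat \<Rightarrow> real"
  assumes "prob_space M"
    and K: "K \<ge> 1"
    and filt_sub: "\<And>t. subalgebra M (F t)"
    and filt_mono: "\<And>s t. s \<le> t \<Longrightarrow> sets (F s) \<subseteq> sets (F t)"
    and A_meas: "\<And>t. A t \<in> measurable (F t) (count_space UNIV)"
    and A_range: "\<And>t \<omega>. \<omega> \<in> space M \<Longrightarrow> A t \<omega> < K"
    and x_meas: "\<And>t a. t \<ge> 1 \<Longrightarrow> x t a \<in> borel_measurable (F (t - 1))"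
    and x_nonneg: "\<And>t a \<omega>. \<omega> \<in> space M \<Longrightarrow> x t a \<omega> \<ge> 0"
    and x_sum: "\<And>t \<omega>. \<omega> \<in> space M \<Longrightarrow> (\<Sum>a<K. x t a \<omega>) = 1"
    and x_cond: "\<And>t a. t \<ge> 1 \<Longrightarrow> a < K \<Longrightarrow>
        AE \<omega> in M. real_cond_exp M (F (t - 1)) (\<lambda>\<omega>. if A t \<omega> = a then 1 else 0) \<omega> = x t a \<omega>"
    and eps_pos: "\<And>T. \<epsilon> T > 0"
    and eps_lim: "filterlim (\<lambda>T. real T * \<epsilon> T) at_top sequentially"
    and eps_min: "\<And>T. T \<ge> 1 \<Longrightarrow> AE \<omega> in M. \<forall>a<K. avg_prob x T a \<omega> \<ge> \<epsilon> T"
    and xstar_pos: "\<And>T a. a < K \<Longrightarrow> xstar T a > 0"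
    and xstar_sum: "\<And>T. (\<Sum>a<K. xstar T a) = 1"
    and xstar_conv: "\<And>a. a < K \<Longrightarrow> conv_in_prob M (\<lambda>T \<omega>. avg_prob x T a \<omega> / xstar T a) 1"
  shows "stable M K A"
  unfolding stable_def
proof (intro allI impI)
  fix a assume a: "a < K"
  define m where "m = (\<lambda>T. real T * xstar T a)"
  have x_le_1: "x t a \<omega> \<le> 1" if "\<omega> \<in> space M" for t \<omega>
    using member_le_sum[of a "{..<K}" "\<lambda>b. x t b \<omega>"] a x_nonneg[OF that] x_sum[OF that] by simp
  interpret predictable_bernoulli M F "\<lambda>t \<omega>. if A t \<omega> = a then 1 else 0" "\<lambda>t. x t a"
    using \<open>prob_space M\<close> filt_sub filt_mono A_meas x_meas x_nonneg x_le_1 x_cond[OF _ a]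
    by (rule predictable_bernoulli_indicator[where p = "\<lambda>t. x t a"])
  have avg_measurable: "avg_prob x T a \<in> borel_measurable M" for T
    unfolding avg_prob_def using p_borel_measurable
    by (intro borel_measurable_sum borel_measurable_times) auto
  have "\<forall>\<^sub>F T in sequentially. AE \<omega> in M. \<epsilon> T \<le> avg_prob x T a \<omega>"
  proof (rule eventually_sequentiallyI[of 1])
    fix T :: nat assume "1 \<le> T"
    from eps_min[OF this] show "AE \<omega> in M. \<epsilon> T \<le> avg_prob x T a \<omega>"
      by eventually_elim (use a in blast)
  qed
  from filterlim_of_conv_in_prob_ratio[OF xstar_conv[OF a] avg_measurable xstar_pos[OF a] this eps_lim]
  have m_lim: "filterlim m at_top sequentially"
    unfolding m_def .
  have "avg_prob x T a \<omega> / xstar T a = (\<Sum>t=1..T. x t a \<omega>) / m T" for T \<omega>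
    by (simp add: avg_prob_def m_def)
  with conv_in_prob_count_ratio[OF m_lim] xstar_conv[OF a]
  have "conv_in_prob M (\<lambda>T \<omega>. real (pulls A T a \<omega>) / m T) 1"
    by (simp add: real_pulls_eq_sum)
  with m_lim show "\<exists>nstar. conv_in_prob M (\<lambda>T \<omega>. real (pulls A T a \<omega>) / nstar T) 1
      \<and> filterlim nstar at_top sequentially"
    by blast
qed

end
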